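(* Let $\epsilon>0$. Then $$\min_{\substack{P_{U|Y}:\,X-Y-U\\ \|P_{X|U=u}-P_X\|_1\le\epsilon\ \forall u\in\mathcal{U}}} H(Y|U)\;=\;\min_{\substack{P_U,\ \{J_u\},\ P_{Y|U=u}\in\mathbb{S}_u\ \forall u\in\mathcal{U},\\ \sum_u P_U(u)P_{Y|U=u}=P_Y,\\ \{J_u\}\text{ satisfies (P1),(P2),(P3)}}} H(Y|U),$$ where on the right $H(Y|U)=\sum_u P_U(u)H(P_{Y|U=u})$, the minimization being over finite alphabets $\mathcal{U}$, distributions $P_U$ on $\mathcal{U}$, vectors $J_u\in\mathbb{R}^{|\mathcal{X}|}$ and vectors $P_{Y|U=u}\in\mathbb{R}^{|\mathcal{Y}|}$.
   Context: Setting: $X,Y$ are random variables on finite alphabets $\mathcal{X},\mathcal{Y}$ with $|\mathcal{X}|<|\mathcal{Y}|$, joint pmf $P_{XY}$, marginal vectors $P_X\in\mathbb{R}^{|\mathcal{X}|},P_Y\in\mathbb{R}^{|\mathcal{Y}|}$ with all entries positive. $P_{X|Y}\in\mathbb{R}^{|\mathcal{X}|\times|\mathcal{Y}|}$ (entries $P_{X|Y}(x|y)$) has full row rank, and the columns are ordered so that $P_{X|Y}=[P_{X|Y_1},P_{X|Y_2}]$ with $P_{X|Y_1}\in\mathbb{R}^{|\mathcal{X}|\times|\mathcal{X}|}$ invertible. Let $P_{X|Y}=U\Sigma V^T$ be a singular value decomposition with $V=[v_1,\dots,v_{|\mathcal{Y}|}]$ and define $M=[v_1,\dots,v_{|\mathcal{X}|}]^T\in\mathbb{R}^{|\mathcal{X}|\times|\mathcal{Y}|}$.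 For $J_u\in\mathbb{R}^{|\mathcal{X}|}$, $\mathbb{S}_u=\{y\in\mathbb{R}^{|\mathcal{Y}|}: My=MP_Y+\epsilon M\begin{bmatrix}P_{X|Y_1}^{-1}J_u\\0\end{bmatrix},\ y\ge0\}$, where the zero block has size $|\mathcal{Y}|-|\mathcal{X}|$. Properties of $\{J_u\}_{u\in\mathcal{U}}$: (P1) $\sum_x J_u(x)=0$ for all $u$; (P2) $\sum_u P_U(u)J_u(x)=0$ for all $x$; (P3) $\sum_x|J_u(x)|\le1$ for all $u$. On the left, $U$ takes values in a finite alphabet $\mathcal{U}$ and $P_{XYU}=P_{XY}P_{U|Y}$; $\|\cdot\|_1$ is the $\ell_1$ norm. *)

theory Defs
  imports Complex_Main "Jordan_Normal_Form.Gauss_Jordan_Elimination"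
begin

text \<open>Alphabets: X = {0..<nx}, Y = {0..<ny} (nx = dim_row P, ny = dim_col P),
  U = {0..<k}. The joint pmf P_XY is the nx x ny matrix P.\<close>

definition PX :: "real mat \<Rightarrow> real vec" where
  "PX P = vec (dim_row P) (\<lambda>x. \<Sum>y<dim_col P. P $$ (x, y))"

definition PY :: "real mat \<Rightarrow> real vec" where
  "PY P = vec (dim_col P) (\<lambda>y. \<Sum>x<dim_row P. P $$ (x, y))"

definition PXgY :: "real mat \<Rightarrow> real mat" where
  "PXgY P = mat (dim_row P) (dim_col P) (\<lambda>(x, y). P $$ (x, y) / PY P $ y)"

definition PXgY1 :: "real mat \<Rightarrow> real mat" where
  "PXgY1 P = mat (dim_row P) (dim_row P) (\<lambda>(x, y). PXgY P $$ (x, y))"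

definition is_svd :: "real mat \<Rightarrow> real mat \<Rightarrow> real mat \<Rightarrow> real mat \<Rightarrow> bool" where
  "is_svd A U S V \<longleftrightarrow>
     U \<in> carrier_mat (dim_row A) (dim_row A) \<and> V \<in> carrier_mat (dim_col A) (dim_col A) \<and>
     S \<in> carrier_mat (dim_row A) (dim_col A) \<and>
     transpose_mat U * U = 1\<^sub>m (dim_row A) \<and> transpose_mat V * V = 1\<^sub>m (dim_col A) \<and>
     (\<forall>i<dim_row A. \<forall>j<dim_col A. i \<noteq> j \<longrightarrow> S $$ (i, j) = 0) \<and>
     (\<forall>i<min (dim_row A) (dim_col A). S $$ (i, i) \<ge> 0) \<and>
     A = U * S * transpose_mat V"

definition entropy :: "real vec \<Rightarrow> real" where
  "entropy p = - (\<Sum>i<dim_vec p. if p $ i > 0 then p $ i * log 2 (p $ i) else 0)"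

definition l1norm :: "real vec \<Rightarrow> real" where
  "l1norm v = (\<Sum>i<dim_vec v. \<bar>v $ i\<bar>)"

definition S_set :: "real mat \<Rightarrow> real mat \<Rightarrow> real \<Rightarrow> real vec \<Rightarrow> real vec set" where
  "S_set P M \<epsilon> J = {y \<in> carrier_vec (dim_col P).
      M *\<^sub>v y = M *\<^sub>v PY P + \<epsilon> \<cdot>\<^sub>v (M *\<^sub>v ((the (mat_inverse (PXgY1 P)) *\<^sub>v J)
                                 @\<^sub>v 0\<^sub>v (dim_col P - dim_row P)))
      \<and> (\<forall>i<dim_col P. y $ i \<ge> 0)}"

text \<open>Quantities induced by a kernel Q u y = P_{U|Y}(u|y) under X - Y - U\<close>
definition PU_of :: "real mat \<Rightarrow> (nat \<Rightarrow> nat \<Rightarrow> real) \<Rightarrow> nat \<Rightarrow> real" where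
  "PU_of P Q u = (\<Sum>y<dim_col P. PY P $ y * Q u y)"

definition PXgU_of :: "real mat \<Rightarrow> (nat \<Rightarrow> nat \<Rightarrow> real) \<Rightarrow> nat \<Rightarrow> real vec" where
  "PXgU_of P Q u = vec (dim_row P) (\<lambda>x. (\<Sum>y<dim_col P. P $$ (x, y) * Q u y) / PU_of P Q u)"

definition PYgU_of :: "real mat \<Rightarrow> (nat \<Rightarrow> nat \<Rightarrow> real) \<Rightarrow> nat \<Rightarrow> real vec" where
  "PYgU_of P Q u = vec (dim_col P) (\<lambda>y. PY P $ y * Q u y / PU_of P Q u)"

definition left_values :: "real mat \<Rightarrow> real \<Rightarrow> real set" where
  "left_values P \<epsilon> = {H. \<exists>(k::nat) (Q :: nat \<Rightarrow> nat \<Rightarrow> real).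
      (\<forall>u<k. \<forall>y<dim_col P. Q u y \<ge> 0) \<and>
      (\<forall>y<dim_col P. (\<Sum>u<k. Q u y) = 1) \<and>
      (\<forall>u<k. PU_of P Q u > 0 \<longrightarrow> l1norm (PXgU_of P Q u - PX P) \<le> \<epsilon>) \<and>
      H = (\<Sum>u<k. PU_of P Q u * entropy (PYgU_of P Q u))}"

definition right_values :: "real mat \<Rightarrow> real mat \<Rightarrow> real \<Rightarrow> real set" where
  "right_values P M \<epsilon> = {H. \<exists>(k::nat) (PU :: nat \<Rightarrow> real) (J :: nat \<Rightarrow> real vec) (Pyu :: nat \<Rightarrow> real vec).
      (\<forall>u<k. PU u \<ge> 0) \<and> (\<Sum>u<k. PU u) = 1 \<and>
      (\<forall>u<k. J u \<in> carrier_vec (dim_row P) \<and> Pyu u \<in> S_set P M \<epsilon> (J u)) \<and>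
      (\<forall>y<dim_col P. (\<Sum>u<k. PU u * Pyu u $ y) = PY P $ y) \<and>
      (\<forall>u<k. (\<Sum>x<dim_row P. J u $ x) = 0) \<and>
      (\<forall>x<dim_row P. (\<Sum>u<k. PU u * J u $ x) = 0) \<and>
      (\<forall>u<k. (\<Sum>x<dim_row P. \<bar>J u $ x\<bar>) \<le> 1) \<and>
      H = (\<Sum>u<k. PU u * entropy (Pyu u))}"

definition is_min_of :: "real set \<Rightarrow> real \<Rightarrow> bool" where
  "is_min_of A v \<longleftrightarrow> v \<in> A \<and> (\<forall>w\<in>A. v \<le> w)"

end

theory Submission
  imports Defs "HOL-Analysis.Elementary_Metric_Spaces" "Jordan_Normal_Form.Determinant"
    "HOL-Real_Asymp.Real_Asymp"
begin

(* Both problems range over the same set of values.  A kernel P_{U|Y} is the same thing, via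
   Bayes' rule, as a decomposition P_Y = sum_u P_U(u) p_u of P_Y into posteriors p_u = P_{Y|U=u};
   the Markov chain X - Y - U gives P_{X|U=u} = P_{X|Y} p_u, so the privacy constraint reads
   ||P_{X|Y} p_u - P_X||_1 <= eps.  On the right-hand side, the first |X| right singular vectors
   of the full-row-rank matrix P_{X|Y} span its row space, so M y = M z iff P_{X|Y} y = P_{X|Y} z
   and the affine condition defining S_u says exactly P_{X|Y} p_u = P_X + eps J_u; then (P1) and
   (P3) say that p_u sums to one and meets the l1 constraint, while (P2) follows from the mixture
   condition.  Finally the minimum is attained: by a Caratheodory argument |Y| letters suffice,
   decompositions with |Y| letters form a compact set, and H(Y|U) is continuous on it. *)

lemma mult_mat_vec_nth:
  assumes "A \<in> carrier_mat nr nc" and "v \<in> carrier_vec nc" and "i < nr"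
  shows "(A *\<^sub>v v) $ i = (\<Sum>j<nc. A $$ (i, j) * v $ j)"
  using assms by (auto simp: scalar_prod_def lessThan_atLeast0 intro!: sum.cong)

lemma mult_mat_vec_zero [simp]: "A \<in> carrier_mat nr nc \<Longrightarrow> A *\<^sub>v 0\<^sub>v nc = 0\<^sub>v nr"
  by (intro eq_vecI) (auto simp: scalar_prod_def)

lemma diff_eq_zero_vec_iff:
  fixes a b :: "'a::ab_group_add vec"
  assumes "a \<in> carrier_vec n" and "b \<in> carrier_vec n"
  shows "a - b = 0\<^sub>v n \<longleftrightarrow> a = b"
proof
  assume "a - b = 0\<^sub>v n"
  then have "(a - b) $ i = 0" if "i < n" for i
    using that by simp
  then show "a = b"
    using assms by (intro eq_vecI) auto
qed (use assms in simp)

section \<open>Caratheodory reduction of convex decompositions\<close>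

lemma exists_linear_dependence:
  fixes q :: "nat \<Rightarrow> nat \<Rightarrow> 'a::field"
  assumes "n < k"
  shows "\<exists>c. (\<exists>u<k. c u \<noteq> 0) \<and> (\<forall>y<n. (\<Sum>u<k. c u * q u y) = 0)"
proof -
  define B where "B = mat\<^sub>r k k (\<lambda>y. if y = n then 0\<^sub>v k else vec k (\<lambda>u. q u y))"
  have B: "B \<in> carrier_mat k k"
    by (simp add: B_def)
  have "det B = 0"
    unfolding B_def using assms by (intro det_row_0) auto
  then obtain v where v: "v \<in> carrier_vec k" "v \<noteq> 0\<^sub>v k" "B *\<^sub>v v = 0\<^sub>v k"
    using det_0_iff_vec_prod_zero_field[OF B] by auto
  have "\<exists>u<k. v $ u \<noteq> 0"
    using v(1,2) by (metis eq_vecI carrier_vecD index_zero_vec)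
  moreover have "(\<Sum>u<k. v $ u * q u y) = 0" if "y < n" for y
  proof -
    have "(B *\<^sub>v v) $ y = (\<Sum>u<k. B $$ (y, u) * v $ u)"
      using that assms by (intro mult_mat_vec_nth[OF B v(1)]) simp
    also have "\<dots> = (\<Sum>u<k. v $ u * q u y)"
      using that assms by (intro sum.cong) (auto simp: B_def)
    finally show ?thesis
      using v(3) that assms by simp
  qed
  ultimately show ?thesis
    by blast
qed

lemma exists_cost_nonincreasing_dependence:
  fixes q :: "nat \<Rightarrow> nat \<Rightarrow> real" and h :: "nat \<Rightarrow> real"
  assumes "n < k" and q: "\<forall>u<k. (\<Sum>y<n. q u y) = 1"
  shows "\<exists>c. (\<exists>u<k. 0 < c u) \<and> (\<forall>y<n. (\<Sum>u<k. c u * q u y) = 0) \<and> (\<Sum>u<k. c u) = 0 \<and>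
    0 \<le> (\<Sum>u<k. c u * h u)"
proof -
  obtain c0 where c0: "\<exists>u<k. c0 u \<noteq> 0" "\<forall>y<n. (\<Sum>u<k. c0 u * q u y) = 0"
    using exists_linear_dependence[OF \<open>n < k\<close>] by blast
  define s :: real where "s = (if 0 \<le> (\<Sum>u<k. c0 u * h u) then 1 else -1)"
  define c where "c u = s * c0 u" for u
  have c_combination: "(\<Sum>u<k. c u * g u) = s * (\<Sum>u<k. c0 u * g u)" for g
    by (simp add: c_def sum_distrib_left mult.assoc)
  have c_kernel: "(\<Sum>u<k. c u * q u y) = 0" if "y < n" for y
    using c0(2) that by (simp add: c_combination)
  have c_sum: "(\<Sum>u<k. c u) = 0"
  proof -
    have "(\<Sum>u<k. c u) = (\<Sum>u<k. c u * (\<Sum>y<n. q u y))"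
      using q by simp
    also have "\<dots> = (\<Sum>y<n. \<Sum>u<k. c u * q u y)"
      by (simp add: sum_distrib_left sum.swap[of _ "{..<k}"])
    finally show ?thesis
      using c_kernel by simp
  qed
  have "\<exists>u<k. 0 < c u"
  proof (rule ccontr)
    assume "\<not> (\<exists>u<k. 0 < c u)"
    then have "\<forall>u\<in>{..<k}. - c u = 0"
      using c_sum sum_nonneg_eq_0_iff[of "{..<k}" "\<lambda>u. - c u"] by (force simp: sum_negf)
    then show False
      using c0(1) by (auto simp: c_def s_def split: if_splits)
  qed
  moreover have "0 \<le> (\<Sum>u<k. c u * h u)"
    by (simp add: c_combination s_def)
  ultimately show ?thesis
    using c_kernel c_sum by blast
qed

lemma exists_reweighting_with_zero:
  fixes q :: "nat \<Rightarrow> nat \<Rightarrow> real" and w h :: "nat \<Rightarrow> real"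
  assumes "n < k" and w: "\<forall>u<k. 0 \<le> w u" and q: "\<forall>u<k. (\<Sum>y<n. q u y) = 1"
  shows "\<exists>w'. (\<forall>u<k. 0 \<le> w' u) \<and> (\<Sum>u<k. w' u) = (\<Sum>u<k. w u) \<and>
    (\<forall>y<n. (\<Sum>u<k. w' u * q u y) = (\<Sum>u<k. w u * q u y)) \<and>
    (\<Sum>u<k. w' u * h u) \<le> (\<Sum>u<k. w u * h u) \<and> (\<exists>u0<k. w' u0 = 0)"
proof -
  obtain c where c: "\<exists>u<k. 0 < c u" "\<forall>y<n. (\<Sum>u<k. c u * q u y) = 0" "(\<Sum>u<k. c u) = 0"
    "0 \<le> (\<Sum>u<k. c u * h u)"
    using exists_cost_nonincreasing_dependence[OF assms(1) q] by blast
  \<comment> \<open>move the weights along \<open>-c\<close> until the first weight reaches zero\<close>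
  define pos where "pos = {u. u < k \<and> 0 < c u}"
  have "pos \<noteq> {}" "finite pos"
    using c(1) by (auto simp: pos_def)
  then obtain u0 where u0: "u0 \<in> pos" and u0_min: "\<And>u. u \<in> pos \<Longrightarrow> w u0 / c u0 \<le> w u / c u"
    using arg_min_if_finite(1,2)[of pos "\<lambda>u. w u / c u"] by (metis not_less)
  define t where "t = w u0 / c u0"
  have "0 \<le> t"
    using u0 w by (simp add: t_def pos_def)
  define w' where "w' u = w u - t * c u" for u
  have w'_nonneg: "0 \<le> w' u" if "u < k" for u
  proof (cases "0 < c u")
    case True
    then show ?thesis
      using u0_min[of u] that by (simp add: w'_def t_def pos_def le_divide_eq)
  next
    case False
    then show ?thesis
      using that \<open>0 \<le> t\<close> w[rule_format, of u] mult_nonneg_nonpos[of t "c u"]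
      by (simp add: w'_def)
  qed
  have w'_combination: "(\<Sum>u<k. w' u * g u) = (\<Sum>u<k. w u * g u) - t * (\<Sum>u<k. c u * g u)" for g
    by (simp add: w'_def left_diff_distrib sum_subtractf sum_distrib_left mult.assoc)
  have "w' u0 = 0" "u0 < k"
    using u0 by (auto simp: w'_def t_def pos_def)
  then show ?thesis
    using w'_nonneg w'_combination[of "\<lambda>_. 1"] w'_combination[of h]
      w'_combination[of "\<lambda>u. q u _"] c \<open>0 \<le> t\<close>
    by (intro exI[of _ w']) auto
qed

definition convex_decomposition ::
    "real vec set \<Rightarrow> real vec \<Rightarrow> nat \<Rightarrow> (nat \<Rightarrow> real) \<Rightarrow> (nat \<Rightarrow> real vec) \<Rightarrow> bool" where
  "convex_decomposition F t k w p \<longleftrightarrow>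
     (\<forall>u<k. 0 \<le> w u) \<and> (\<Sum>u<k. w u) = 1 \<and> (\<forall>u<k. p u \<in> F) \<and>
     (\<forall>y<dim_vec t. (\<Sum>u<k. w u * p u $ y) = t $ y)"

definition conditional_entropy_values :: "real vec set \<Rightarrow> real vec \<Rightarrow> real set" where
  "conditional_entropy_values F t =
     {\<Sum>u<k. w u * entropy (p u) | k w p. convex_decomposition F t k w p}"

lemma convex_decomposition_drop_atom:
  assumes dec: "convex_decomposition F t k w p" and "dim_vec t < k"
    and F: "\<forall>q\<in>F. (\<Sum>y<dim_vec t. q $ y) = 1"
  shows "\<exists>w' p'. convex_decomposition F t (k - 1) w' p' \<and>
    (\<Sum>u<k - 1. w' u * h (p' u)) \<le> (\<Sum>u<k. w u * h (p u))"
proof -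
  have "\<forall>u<k. (\<Sum>y<dim_vec t. p u $ y) = 1"
    using dec F by (simp add: convex_decomposition_def)
  then obtain w1 u0 where w1: "\<forall>u<k. 0 \<le> w1 u" "(\<Sum>u<k. w1 u) = (\<Sum>u<k. w u)"
      "\<forall>y<dim_vec t. (\<Sum>u<k. w1 u * p u $ y) = (\<Sum>u<k. w u * p u $ y)"
      "(\<Sum>u<k. w1 u * h (p u)) \<le> (\<Sum>u<k. w u * h (p u))"
    and u0: "u0 < k" "w1 u0 = 0"
    using exists_reweighting_with_zero[OF \<open>dim_vec t < k\<close>, of w "\<lambda>u y. p u $ y" "\<lambda>u. h (p u)"] dec
    by (auto simp: convex_decomposition_def)
  define \<tau> where "\<tau> = Transposition.transpose u0 (k - 1)"
  have \<tau>_less: "\<tau> u < k" if "u < k - 1" for u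
    using that u0 by (auto simp: \<tau>_def transpose_def)
  have drop: "(\<Sum>u<k - 1. w1 (\<tau> u) * g u) = (\<Sum>u<k. w1 u * g (\<tau> u))" for g :: "nat \<Rightarrow> real"
  proof -
    have "(\<Sum>u<k. w1 u * g (\<tau> u)) = (\<Sum>u<k. w1 (\<tau> u) * g u)"
      by (rule sum.reindex_bij_witness[of _ \<tau> \<tau>]) (use u0 in \<open>auto simp: \<tau>_def transpose_def\<close>)
    also have "\<dots> = (\<Sum>u<k - 1. w1 (\<tau> u) * g u) + w1 (\<tau> (k - 1)) * g (k - 1)"
      using u0 by (cases k) auto
    finally show ?thesis
      using u0 by (simp add: \<tau>_def)
  qed
  have \<tau>\<tau>: "\<tau> (\<tau> u) = u" for u
    by (simp add: \<tau>_def)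
  have "convex_decomposition F t (k - 1) (w1 \<circ> \<tau>) (p \<circ> \<tau>)"
    unfolding convex_decomposition_def
  proof (intro conjI allI impI)
    show "0 \<le> (w1 \<circ> \<tau>) u" "(p \<circ> \<tau>) u \<in> F" if "u < k - 1" for u
      using w1(1) dec \<tau>_less[OF that] by (auto simp: convex_decomposition_def)
    show "(\<Sum>u<k - 1. (w1 \<circ> \<tau>) u) = 1"
      using drop[of "\<lambda>_. 1"] w1(2) dec by (simp add: convex_decomposition_def)
    show "(\<Sum>u<k - 1. (w1 \<circ> \<tau>) u * (p \<circ> \<tau>) u $ y) = t $ y" if "y < dim_vec t" for y
      using drop[of "\<lambda>u. p (\<tau> u) $ y"] w1(3) dec that by (simp add: \<tau>\<tau> convex_decomposition_def)
  qed
  moreover have "(\<Sum>u<k - 1. (w1 \<circ> \<tau>) u * h ((p \<circ> \<tau>) u)) \<le> (\<Sum>u<k. w u * h (p u))"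
    using w1(4) drop[of "\<lambda>u. h (p (\<tau> u))"] by (simp add: \<tau>\<tau>)
  ultimately show ?thesis
    by blast
qed

lemma convex_decomposition_reduce:
  assumes "convex_decomposition F t k w p" and F: "\<forall>q\<in>F. (\<Sum>y<dim_vec t. q $ y) = 1"
  shows "\<exists>w' p'. convex_decomposition F t (dim_vec t) w' p' \<and>
    (\<Sum>u<dim_vec t. w' u * h (p' u)) \<le> (\<Sum>u<k. w u * h (p u))"
  using assms(1)
proof (induction k arbitrary: w p)
  case 0
  then show ?case
    by (simp add: convex_decomposition_def)
next
  case (Suc k)
  show ?case
  proof (cases "Suc k \<le> dim_vec t")
    case True
    define w' where "w' u = (if u < Suc k then w u else 0)" for u
    define p' where "p' u = (if u < Suc k then p u else p 0)" for u
    have pad: "(\<Sum>u<dim_vec t. w' u * g (p' u)) = (\<Sum>u<Suc k. w u * g (p u))"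
      for g :: "real vec \<Rightarrow> real"
      by (rule sum.mono_neutral_cong_right) (use True in \<open>auto simp: w'_def p'_def\<close>)
    have "convex_decomposition F t (dim_vec t) w' p'"
      using Suc.prems pad[of "\<lambda>_. 1"] pad[of "\<lambda>q. q $ _"]
      by (auto simp: convex_decomposition_def w'_def p'_def)
    then show ?thesis
      using pad[of h] by (intro exI[of _ w'] exI[of _ p']) simp
  next
    case False
    then obtain w1 p1 where "convex_decomposition F t k w1 p1"
        "(\<Sum>u<k. w1 u * h (p1 u)) \<le> (\<Sum>u<Suc k. w u * h (p u))"
      using convex_decomposition_drop_atom[OF Suc.prems _ F] by fastforce
    then show ?thesis
      using Suc.IH by (meson order_trans)
  qed
qed

section \<open>Existence of an optimal decomposition\<close>

lemma le_1_if_sum_eq_1: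
  fixes a :: "nat \<Rightarrow> real"
  assumes "\<forall>i<m. 0 \<le> a i" and "(\<Sum>i<m. a i) = 1" and "i < m"
  shows "a i \<le> 1"
  using member_le_sum[of i "{..<m}" a] assms by auto

lemma entropy_nonneg:
  assumes "\<forall>i<dim_vec p. p $ i \<le> 1"
  shows "0 \<le> entropy p"
  unfolding entropy_def using assms
  by (auto intro!: sum_nonpos simp: mult_nonneg_nonpos)

lemma isCont_xlogx: "isCont (\<lambda>x::real. if 0 < x then x * log b x else 0) x"
proof -
  consider "x < 0" | "x = 0" | "0 < x" by linarith
  then show ?thesis
  proof cases
    case 1
    have "eventually (\<lambda>y. y < 0) (nhds x)"
      using 1 by (intro eventually_nhds_in_open[of "{..<0}", simplified]) auto
    then have "eventually (\<lambda>y. (if 0 < y then y * log b y else 0) = 0) (nhds x)"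
      by eventually_elim auto
    then show ?thesis
      using isCont_cong by fastforce
  next
    case 2
    have "((\<lambda>y. y * ln y / ln b) \<longlongrightarrow> 0) (at_right 0)"
      by (intro tendsto_divide_zero) real_asymp
    then have "((\<lambda>y::real. if 0 < y then y * log b y else 0) \<longlongrightarrow> 0) (at_right 0)"
      by (rule Lim_transform_eventually)
        (auto simp: eventually_at_right_less log_def eventually_at_right_field intro: exI[of _ 1])
    moreover have "((\<lambda>y::real. if 0 < y then y * log b y else 0) \<longlongrightarrow> 0) (at_left 0)"
      by (rule Lim_transform_eventually[OF tendsto_const])
        (auto simp: eventually_at_left_field intro: exI[of _ "-1"])
    ultimately show ?thesis
      using 2 by (simp add: isCont_def filterlim_split_at)
  next
    case 3
    have "eventually (\<lambda>y. 0 < y) (nhds x)"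
      using 3 by (intro eventually_nhds_in_open[of "{0<..}", simplified]) auto
    then have "eventually (\<lambda>y. (if 0 < y then y * log b y else 0) = y * log b y) (nhds x)"
      by eventually_elim auto
    moreover have "isCont (\<lambda>y. y * log b y) x"
      unfolding log_def divide_inverse using 3 by (intro continuous_intros) auto
    ultimately show ?thesis
      using isCont_cong by fastforce
  qed
qed

lemma tendsto_entropy:
  assumes "\<And>j. s j \<in> carrier_vec n" and "q \<in> carrier_vec n"
    and "\<And>y. y < n \<Longrightarrow> (\<lambda>j. s j $ y) \<longlonglongrightarrow> q $ y"
  shows "(\<lambda>j. entropy (s j)) \<longlonglongrightarrow> entropy q"
proof -
  have "(\<lambda>j. if 0 < s j $ y then s j $ y * log 2 (s j $ y) else 0) \<longlonglongrightarrow>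
      (if 0 < q $ y then q $ y * log 2 (q $ y) else 0)" if "y < n" for y
    using isCont_tendsto_compose[OF isCont_xlogx assms(3)[OF that]] .
  moreover have "dim_vec (s j) = n" "dim_vec q = n" for j
    using assms(1,2) by auto
  ultimately show ?thesis
    unfolding entropy_def by (auto intro!: tendsto_intros)
qed

lemma bounded_convergent_subseq:
  fixes f :: "nat \<Rightarrow> 'i \<Rightarrow> real"
  assumes "finite B" and "\<And>j i. i \<in> B \<Longrightarrow> \<bar>f j i\<bar> \<le> C"
  shows "\<exists>l r. strict_mono r \<and> (\<forall>i\<in>B. (\<lambda>j. f (r j) i) \<longlonglongrightarrow> l i)"
proof -
  have "bounded ((\<lambda>x. x i) ` range f)" if "i \<in> B" for i
    unfolding bounded_iff using assms(2)[OF that] by (auto intro!: exI[of _ C])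
  then obtain l r where "strict_mono r"
    and l: "\<forall>e>0. eventually (\<lambda>j. \<forall>i\<in>B. dist (f (r j) i) (l i) < e) sequentially"
    using compact_lemma_general[where proj = "\<lambda>x i. x i" and unproj = "\<lambda>x. x", OF assms(1)] by blast
  moreover have "(\<lambda>j. f (r j) i) \<longlonglongrightarrow> l i" if "i \<in> B" for i
  proof (rule tendstoI)
    fix e :: real
    assume "0 < e"
    then have "eventually (\<lambda>j. \<forall>i\<in>B. dist (f (r j) i) (l i) < e) sequentially"
      using l by blast
    then show "eventually (\<lambda>j. dist (f (r j) i) (l i) < e) sequentially"
      by eventually_elim (use that in blast)
  qed
  ultimately show ?thesis
    by blast
qed

lemma convex_decomposition_convergent_subseq:
  fixes w :: "nat \<Rightarrow> nat \<Rightarrow> real" and p :: "nat \<Rightarrow> nat \<Rightarrow> real vec"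
  assumes F: "\<And>q. q \<in> F \<Longrightarrow> q \<in> carrier_vec n \<and> (\<forall>y<n. 0 \<le> q $ y) \<and> (\<Sum>y<n. q $ y) = 1"
    and dec: "\<And>j. convex_decomposition F t k (w j) (p j)"
  shows "\<exists>r w' p'. strict_mono r \<and> (\<forall>u<k. (\<lambda>j. w (r j) u) \<longlonglongrightarrow> w' u) \<and>
    (\<forall>u<k. p' u \<in> carrier_vec n \<and> (\<forall>y<n. (\<lambda>j. p (r j) u $ y) \<longlonglongrightarrow> p' u $ y))"
proof -
  define f where "f j = (\<lambda>(u, y). if y < n then p j u $ y else w j u)" for j
  have f_bound: "\<bar>f j (u, y)\<bar> \<le> 1" if "u < k" for u y j
  proof -
    have "p j u \<in> F" "\<forall>u<k. 0 \<le> w j u" "(\<Sum>u<k. w j u) = 1"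
      using dec[of j] that by (auto simp: convex_decomposition_def)
    then show ?thesis
      using F[of "p j u"] that le_1_if_sum_eq_1[of n "\<lambda>y. p j u $ y"] le_1_if_sum_eq_1[of k "w j"]
      by (auto simp: f_def)
  qed
  have "\<bar>f j i\<bar> \<le> 1" if "i \<in> {..<k} \<times> {..n}" for j i
    using that f_bound by auto
  then obtain l r where "strict_mono r" and l: "\<forall>i\<in>{..<k} \<times> {..n}. (\<lambda>j. f (r j) i) \<longlonglongrightarrow> l i"
    using bounded_convergent_subseq[of "{..<k} \<times> {..n}" f 1] by blast
  have "(\<lambda>j. w (r j) u) \<longlonglongrightarrow> l (u, n)" if "u < k" for u
    using l[rule_format, of "(u, n)"] that by (simp add: f_def)
  moreover have "(\<lambda>j. p (r j) u $ y) \<longlonglongrightarrow> vec n (\<lambda>y. l (u, y)) $ y" if "u < k" "y < n" for u y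
    using l[rule_format, of "(u, y)"] that by (simp add: f_def)
  ultimately show ?thesis
    using \<open>strict_mono r\<close>
    by (intro exI[of _ r] exI[of _ "\<lambda>u. l (u, n)"] exI[of _ "\<lambda>u. vec n (\<lambda>y. l (u, y))"]) auto
qed

lemma convex_decomposition_limit:
  fixes w :: "nat \<Rightarrow> nat \<Rightarrow> real" and p :: "nat \<Rightarrow> nat \<Rightarrow> real vec"
  assumes F: "\<And>s q. (\<And>j. s j \<in> F) \<Longrightarrow> q \<in> carrier_vec n \<Longrightarrow>
      (\<And>y. y < n \<Longrightarrow> (\<lambda>j. s j $ y) \<longlonglongrightarrow> q $ y) \<Longrightarrow> q \<in> F"
    and "dim_vec t = n" and dec: "\<And>j. convex_decomposition F t k (w j) (p j)"
    and w: "\<And>u. u < k \<Longrightarrow> (\<lambda>j. w j u) \<longlonglongrightarrow> w' u"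
    and p: "\<And>u. u < k \<Longrightarrow> p' u \<in> carrier_vec n"
      "\<And>u y. u < k \<Longrightarrow> y < n \<Longrightarrow> (\<lambda>j. p j u $ y) \<longlonglongrightarrow> p' u $ y"
  shows "convex_decomposition F t k w' p'"
  unfolding convex_decomposition_def
proof (intro conjI allI impI)
  show "0 \<le> w' u" if "u < k" for u
    by (rule LIMSEQ_le_const[OF w[OF that]]) (use dec that in \<open>auto simp: convex_decomposition_def\<close>)
  show "p' u \<in> F" if "u < k" for u
    by (rule F[of "\<lambda>j. p j u", OF _ p]) (use dec that in \<open>auto simp: convex_decomposition_def\<close>)
  have "(\<lambda>j. \<Sum>u<k. w j u) \<longlonglongrightarrow> (\<Sum>u<k. w' u)"
    by (intro tendsto_sum w) simp
  then show "(\<Sum>u<k. w' u) = 1"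
    using dec by (simp add: convex_decomposition_def LIMSEQ_const_iff)
  fix y
  assume "y < dim_vec t"
  then have "(\<lambda>j. \<Sum>u<k. w j u * p j u $ y) \<longlonglongrightarrow> (\<Sum>u<k. w' u * p' u $ y)"
    using \<open>dim_vec t = n\<close> by (intro tendsto_sum tendsto_mult w p) auto
  then show "(\<Sum>u<k. w' u * p' u $ y) = t $ y"
    using dec \<open>y < dim_vec t\<close> by (simp add: convex_decomposition_def LIMSEQ_const_iff)
qed

lemma Inf_conditional_entropy_values_le:
  assumes F: "\<And>q. q \<in> F \<Longrightarrow> q \<in> carrier_vec n \<and> (\<forall>y<n. 0 \<le> q $ y) \<and> (\<Sum>y<n. q $ y) = 1"
    and "H \<in> conditional_entropy_values F t"
  shows "Inf (conditional_entropy_values F t) \<le> H"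
proof (rule cInf_lower[OF assms(2) bdd_belowI])
  have "0 \<le> entropy q" if "q \<in> F" for q
    using F[OF that] le_1_if_sum_eq_1[of n "\<lambda>y. q $ y"] by (intro entropy_nonneg) auto
  then show "0 \<le> H'" if "H' \<in> conditional_entropy_values F t" for H'
    using that by (force simp: conditional_entropy_values_def convex_decomposition_def
        intro!: sum_nonneg mult_nonneg_nonneg)
qed

lemma exists_minimizing_decompositions:
  assumes F: "\<And>q. q \<in> F \<Longrightarrow> q \<in> carrier_vec n \<and> (\<forall>y<n. 0 \<le> q $ y) \<and> (\<Sum>y<n. q $ y) = 1"
    and t: "dim_vec t = n" and nonempty: "conditional_entropy_values F t \<noteq> {}"
  shows "\<exists>w p. (\<forall>j. convex_decomposition F t n (w j) (p j)) \<and>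
    (\<lambda>j. \<Sum>u<n. w j u * entropy (p j u)) \<longlonglongrightarrow> Inf (conditional_entropy_values F t)"
proof -
  define C where "C = conditional_entropy_values F t"
  define m where "m = Inf C"
  have "\<exists>w p. convex_decomposition F t n w p \<and> (\<Sum>u<n. w u * entropy (p u)) < m + 1 / Suc j" for j
  proof -
    obtain H where "H \<in> C" "H < m + 1 / Suc j"
      using cInf_lessD[of C "m + 1 / Suc j"] nonempty by (auto simp: C_def m_def)
    then show ?thesis
      using convex_decomposition_reduce[of F t _ _ _ entropy] F t
      by (fastforce simp: C_def conditional_entropy_values_def)
  qed
  then obtain w p where dec: "\<And>j. convex_decomposition F t n (w j) (p j)"
    and val: "\<And>j. (\<Sum>u<n. w j u * entropy (p j u)) < m + 1 / Suc j"
    by metis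
  have "(\<lambda>j. \<Sum>u<n. w j u * entropy (p j u)) \<longlonglongrightarrow> m"
  proof (rule tendsto_sandwich[of "\<lambda>_. m" _ _ "\<lambda>j. m + 1 / Suc j"])
    have "(\<Sum>u<n. w j u * entropy (p j u)) \<in> C" for j
      using dec by (auto simp: C_def conditional_entropy_values_def)
    then show "\<forall>\<^sub>F j in sequentially. m \<le> (\<Sum>u<n. w j u * entropy (p j u))"
      using Inf_conditional_entropy_values_le[of F n] F by (simp add: m_def C_def)
    show "\<forall>\<^sub>F j in sequentially. (\<Sum>u<n. w j u * entropy (p j u)) \<le> m + 1 / Suc j"
      using val by (simp add: less_imp_le)
    show "(\<lambda>j. m + 1 / Suc j) \<longlonglongrightarrow> m"
      using tendsto_add[OF tendsto_const LIMSEQ_inverse_real_of_nat, of m]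
      by (simp add: inverse_eq_divide)
  qed simp
  then show ?thesis
    using dec unfolding m_def C_def by blast
qed

theorem conditional_entropy_values_attains_min:
  assumes F_simplex: "\<And>q. q \<in> F \<Longrightarrow> q \<in> carrier_vec n \<and> (\<forall>y<n. 0 \<le> q $ y) \<and> (\<Sum>y<n. q $ y) = 1"
    and F_closed: "\<And>s q. (\<And>j. s j \<in> F) \<Longrightarrow> q \<in> carrier_vec n \<Longrightarrow>
      (\<And>y. y < n \<Longrightarrow> (\<lambda>j. s j $ y) \<longlonglongrightarrow> q $ y) \<Longrightarrow> q \<in> F"
    and t: "dim_vec t = n" and nonempty: "conditional_entropy_values F t \<noteq> {}"
  shows "\<exists>v. is_min_of (conditional_entropy_values F t) v"
proof -
  define C where "C = conditional_entropy_values F t"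
  obtain w p where dec: "\<And>j. convex_decomposition F t n (w j) (p j)"
    and to_Inf: "(\<lambda>j. \<Sum>u<n. w j u * entropy (p j u)) \<longlonglongrightarrow> Inf C"
    using exists_minimizing_decompositions[OF F_simplex t nonempty] unfolding C_def by blast
  obtain r w' p' where "strict_mono r" and w': "\<forall>u<n. (\<lambda>j. w (r j) u) \<longlonglongrightarrow> w' u"
    and p': "\<forall>u<n. p' u \<in> carrier_vec n \<and> (\<forall>y<n. (\<lambda>j. p (r j) u $ y) \<longlonglongrightarrow> p' u $ y)"
    using convex_decomposition_convergent_subseq[where F = F and k = n and w = w and p = p]
      F_simplex dec
    by blast
  have "convex_decomposition F t n w' p'"
    using w' p' by (intro convex_decomposition_limit[OF F_closed t dec]) auto
  then have limit_in_C: "(\<Sum>u<n. w' u * entropy (p' u)) \<in> C"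
    by (auto simp: C_def conditional_entropy_values_def)
  have to_limit: "(\<lambda>j. \<Sum>u<n. w (r j) u * entropy (p (r j) u)) \<longlonglongrightarrow> (\<Sum>u<n. w' u * entropy (p' u))"
    using w' p' dec F_simplex
    by (intro tendsto_sum tendsto_mult tendsto_entropy) (auto simp: convex_decomposition_def)
  have "(\<lambda>j. \<Sum>u<n. w (r j) u * entropy (p (r j) u)) \<longlonglongrightarrow> Inf C"
    using LIMSEQ_subseq_LIMSEQ[OF to_Inf \<open>strict_mono r\<close>] unfolding o_def .
  then have "Inf C \<in> C"
    using LIMSEQ_unique[OF to_limit] limit_in_C by simp
  moreover have "Inf C \<le> H" if "H \<in> C" for H
    using Inf_conditional_entropy_values_le[of F n] F_simplex that by (simp add: C_def)
  ultimately show ?thesis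
    unfolding is_min_of_def C_def by blast
qed

section \<open>The kernel of the truncated right singular matrix\<close>

lemma is_svdD:
  assumes "is_svd A U S V" and "A \<in> carrier_mat nx ny"
  shows "U \<in> carrier_mat nx nx" and "V \<in> carrier_mat ny ny" and "S \<in> carrier_mat nx ny"
    and "transpose_mat U * U = 1\<^sub>m nx"
    and "\<And>i j. i < nx \<Longrightarrow> j < ny \<Longrightarrow> i \<noteq> j \<Longrightarrow> S $$ (i, j) = 0"
    and "A = U * S * transpose_mat V"
  using assms unfolding is_svd_def by auto

lemma orthogonal_mult_mat_vec_cancel:
  fixes U :: "'a::comm_ring_1 mat"
  assumes "U \<in> carrier_mat n n" and "transpose_mat U * U = 1\<^sub>m n" and "v \<in> carrier_vec n"
  shows "transpose_mat U *\<^sub>v (U *\<^sub>v v) = v"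
proof -
  have "transpose_mat U *\<^sub>v (U *\<^sub>v v) = (transpose_mat U * U) *\<^sub>v v"
    using assms(1,3) by (simp add: assoc_mult_mat_vec[of _ n n])
  then show ?thesis
    using assms(2,3) by simp
qed

lemma svd_diag_nonzero:
  assumes svd: "is_svd A U S V" and A: "A \<in> carrier_mat nx ny"
    and rank: "\<forall>c\<in>carrier_vec nx. transpose_mat A *\<^sub>v c = 0\<^sub>v ny \<longrightarrow> c = 0\<^sub>v nx"
    and i: "i < nx"
  shows "S $$ (i, i) \<noteq> 0"
proof
  assume S0: "S $$ (i, i) = 0"
  note U = is_svdD(1)[OF svd A] and V = is_svdD(2)[OF svd A] and S = is_svdD(3)[OF svd A]
    and S_diag = is_svdD(5)[OF svd A] and A_eq = is_svdD(6)[OF svd A]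
  \<comment> \<open>then \<open>U e\<^sub>i\<close> lies in the kernel of \<open>A\<^sup>T = V S\<^sup>T U\<^sup>T\<close>\<close>
  define e :: "real vec" where "e = unit_vec nx i"
  have e: "e \<in> carrier_vec nx"
    by (simp add: e_def)
  have UUe: "transpose_mat U *\<^sub>v (U *\<^sub>v e) = e"
    by (rule orthogonal_mult_mat_vec_cancel[OF U is_svdD(4)[OF svd A] e])
  have Se: "transpose_mat S *\<^sub>v e = 0\<^sub>v ny"
  proof (rule eq_vecI)
    fix j
    assume "j < dim_vec (0\<^sub>v ny :: real vec)"
    then have j: "j < ny"
      by simp
    have "(transpose_mat S *\<^sub>v e) $ j = (\<Sum>l<nx. S $$ (l, j) * e $ l)"
      using S j e by (simp add: mult_mat_vec_nth[of _ ny nx] del: index_mult_mat_vec)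
    also have "\<dots> = S $$ (i, j)"
      using i by (simp add: e_def if_distrib[of "\<lambda>x. _ * x"] cong: if_cong)
    also have "\<dots> = 0"
      using S0 S_diag[OF i j] by (cases "i = j") auto
    finally show "(transpose_mat S *\<^sub>v e) $ j = 0\<^sub>v ny $ j"
      using j by simp
  qed (use S in simp)
  have "transpose_mat A = transpose_mat (transpose_mat V) * transpose_mat (U * S)"
    unfolding A_eq using U S V by (intro transpose_mult) auto
  also have "\<dots> = V * (transpose_mat S * transpose_mat U)"
    by (simp add: transpose_mult[OF U S])
  finally have At: "transpose_mat A = V * (transpose_mat S * transpose_mat U)" .
  have ST: "transpose_mat S \<in> carrier_mat ny nx" and UT: "transpose_mat U \<in> carrier_mat nx nx"
    and Ue: "U *\<^sub>v e \<in> carrier_vec nx"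
    using U S e by auto
  have "transpose_mat A *\<^sub>v (U *\<^sub>v e) = V *\<^sub>v (transpose_mat S *\<^sub>v (transpose_mat U *\<^sub>v (U *\<^sub>v e)))"
    unfolding At assoc_mult_mat_vec[OF V mult_carrier_mat[OF ST UT] Ue]
      assoc_mult_mat_vec[OF ST UT Ue] ..
  also have "\<dots> = 0\<^sub>v ny"
    using V by (simp add: UUe Se)
  finally have "U *\<^sub>v e = 0\<^sub>v nx"
    using rank U e by simp
  then have "e = 0\<^sub>v nx"
    using UUe U by simp
  then show False
    using i by (metis e_def index_unit_vec(2) index_zero_vec(1) zero_neq_one)
qed

lemma svd_kernel_eq:
  assumes svd: "is_svd A U S V" and A: "A \<in> carrier_mat nx ny" and "nx \<le> ny"
    and rank: "\<forall>c\<in>carrier_vec nx. transpose_mat A *\<^sub>v c = 0\<^sub>v ny \<longrightarrow> c = 0\<^sub>v nx"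
    and M: "M = mat nx ny (\<lambda>(i, j). V $$ (j, i))" and w: "w \<in> carrier_vec ny"
  shows "M *\<^sub>v w = 0\<^sub>v nx \<longleftrightarrow> A *\<^sub>v w = 0\<^sub>v nx"
proof -
  note U = is_svdD(1)[OF svd A] and V = is_svdD(2)[OF svd A] and S = is_svdD(3)[OF svd A]
    and S_diag = is_svdD(5)[OF svd A] and A_eq = is_svdD(6)[OF svd A]
  \<comment> \<open>\<open>M w\<close> consists of the first \<open>nx\<close> coordinates of \<open>z = V\<^sup>T w\<close>, and \<open>A w = U (S z)\<close>
    where \<open>S z\<close> scales exactly these coordinates by the nonzero singular values\<close>
  define z where "z = transpose_mat V *\<^sub>v w"
  have z: "z \<in> carrier_vec ny"
    using V w by (simp add: z_def)
  have Mw: "(M *\<^sub>v w) $ i = z $ i" if "i < nx" for i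
    using that \<open>nx \<le> ny\<close> V w
    by (simp add: M z_def mult_mat_vec_nth[of _ nx ny] mult_mat_vec_nth[of _ ny ny]
        del: index_mult_mat_vec)
  have Sz: "(S *\<^sub>v z) $ i = S $$ (i, i) * z $ i" if "i < nx" for i
  proof -
    have "(S *\<^sub>v z) $ i = (\<Sum>j<ny. S $$ (i, j) * z $ j)"
      by (rule mult_mat_vec_nth[OF S z that])
    also have "\<dots> = (\<Sum>j<ny. if j = i then S $$ (i, i) * z $ i else 0)"
      using S_diag that by (intro sum.cong) auto
    finally show ?thesis
      using that \<open>nx \<le> ny\<close> by simp
  qed
  have Sz_carrier: "S *\<^sub>v z \<in> carrier_vec nx"
    using S z by simp
  have "A *\<^sub>v w = (U * S) *\<^sub>v z"
    unfolding A_eq z_def using V by (intro assoc_mult_mat_vec[OF mult_carrier_mat[OF U S] _ w]) simp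
  also have "\<dots> = U *\<^sub>v (S *\<^sub>v z)"
    by (rule assoc_mult_mat_vec[OF U S z])
  finally have Aw: "A *\<^sub>v w = U *\<^sub>v (S *\<^sub>v z)" .
  have "M *\<^sub>v w = 0\<^sub>v nx \<longleftrightarrow> (\<forall>i<nx. z $ i = 0)"
    using Mw M by (auto simp: vec_eq_iff)
  also have "\<dots> \<longleftrightarrow> S *\<^sub>v z = 0\<^sub>v nx"
    using Sz S svd_diag_nonzero[OF svd A rank] by (auto simp: vec_eq_iff)
  also have "\<dots> \<longleftrightarrow> A *\<^sub>v w = 0\<^sub>v nx"
  proof
    assume "A *\<^sub>v w = 0\<^sub>v nx"
    then have "transpose_mat U *\<^sub>v (U *\<^sub>v (S *\<^sub>v z)) = 0\<^sub>v nx"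
      using Aw U by simp
    then show "S *\<^sub>v z = 0\<^sub>v nx"
      using orthogonal_mult_mat_vec_cancel[OF U is_svdD(4)[OF svd A] Sz_carrier] by simp
  qed (use Aw U in simp)
  finally show ?thesis .
qed

lemma invertible_mat_inverse:
  fixes A :: "'a::field mat"
  assumes "A \<in> carrier_mat n n" and "invertible_mat A"
  shows "the (mat_inverse A) \<in> carrier_mat n n" and "A * the (mat_inverse A) = 1\<^sub>m n"
proof -
  obtain B where AB: "A * B = 1\<^sub>m n" and BA: "B * A = 1\<^sub>m (dim_row B)"
    using assms unfolding invertible_mat_def inverts_mat_def by auto
  have "B \<in> carrier_mat n n"
    using arg_cong[OF AB, of dim_col] arg_cong[OF BA, of dim_col] assms(1) by auto
  then have "A \<in> Units (ring_mat TYPE('a) n ())"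
    unfolding Units_def ring_mat_def using assms(1) AB BA by auto
  then obtain B' where "mat_inverse A = Some B'"
    using mat_inverse(1)[OF assms(1), of "()"] by (cases "mat_inverse A") auto
  then show "the (mat_inverse A) \<in> carrier_mat n n" and "A * the (mat_inverse A) = 1\<^sub>m n"
    using mat_inverse(2)[OF assms(1)] by auto
qed

lemma mult_mat_vec_append_zero:
  assumes A: "A \<in> carrier_mat nr nc" and v: "v \<in> carrier_vec k" and "k \<le> nc"
  shows "A *\<^sub>v (v @\<^sub>v 0\<^sub>v (nc - k)) = mat nr k (\<lambda>(i, j). A $$ (i, j)) *\<^sub>v v"
proof (rule eq_vecI)
  fix i
  assume "i < dim_vec (mat nr k (\<lambda>(i, j). A $$ (i, j)) *\<^sub>v v)"
  then have i: "i < nr"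
    by simp
  have dim_v: "dim_vec v = k"
    using v by auto
  have append_nth: "(v @\<^sub>v 0\<^sub>v (nc - k)) $ j = (if j < k then v $ j else 0)" if "j < nc" for j
    using that dim_v by (subst index_append_vec) auto
  have "v @\<^sub>v 0\<^sub>v (nc - k) \<in> carrier_vec nc"
    using dim_v \<open>k \<le> nc\<close> by (intro carrier_vecI) simp
  then have "(A *\<^sub>v (v @\<^sub>v 0\<^sub>v (nc - k))) $ i = (\<Sum>j<nc. A $$ (i, j) * (v @\<^sub>v 0\<^sub>v (nc - k)) $ j)"
    by (rule mult_mat_vec_nth[OF A _ i])
  also have "\<dots> = (\<Sum>j<k. A $$ (i, j) * v $ j)"
    using \<open>k \<le> nc\<close> by (intro sum.mono_neutral_cong_right) (auto simp: append_nth)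
  also have "\<dots> = (mat nr k (\<lambda>(i, j). A $$ (i, j)) *\<^sub>v v) $ i"
    using i v by (simp add: mult_mat_vec_nth[of _ nr k] del: index_mult_mat_vec)
  finally show "(A *\<^sub>v (v @\<^sub>v 0\<^sub>v (nc - k))) $ i = (mat nr k (\<lambda>(i, j). A $$ (i, j)) *\<^sub>v v) $ i" .
qed (use A in simp)

section \<open>Both problems as decompositions of the output distribution\<close>

definition feasible_posteriors :: "real mat \<Rightarrow> real \<Rightarrow> real vec set" where
  "feasible_posteriors P \<epsilon> = {p \<in> carrier_vec (dim_col P).
     (\<forall>y<dim_col P. 0 \<le> p $ y) \<and> (\<Sum>y<dim_col P. p $ y) = 1 \<and> l1norm (PXgY P *\<^sub>v p - PX P) \<le> \<epsilon>}"

definition normalized_leakage :: "real mat \<Rightarrow> real \<Rightarrow> real vec \<Rightarrow> real vec" where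
  "normalized_leakage P \<epsilon> p = vec (dim_row P) (\<lambda>x. ((PXgY P *\<^sub>v p) $ x - PX P $ x) / \<epsilon>)"

locale joint_pmf =
  fixes P :: "real mat" and nx ny :: nat
  assumes P_carrier: "P \<in> carrier_mat nx ny"
    and P_sum: "(\<Sum>x<nx. \<Sum>y<ny. P $$ (x, y)) = 1"
    and PY_pos: "\<forall>y<ny. 0 < PY P $ y"
begin

lemma dim_row_P [simp]: "dim_row P = nx" and dim_col_P [simp]: "dim_col P = ny"
  using P_carrier by auto

lemma PX_carrier [simp]: "PX P \<in> carrier_vec nx" and dim_PX [simp]: "dim_vec (PX P) = nx"
  and PY_carrier [simp]: "PY P \<in> carrier_vec ny" and dim_PY [simp]: "dim_vec (PY P) = ny"
  and PXgY_carrier [simp]: "PXgY P \<in> carrier_mat nx ny"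
  and dim_row_PXgY [simp]: "dim_row (PXgY P) = nx" and dim_col_PXgY [simp]: "dim_col (PXgY P) = ny"
  by (simp_all add: PX_def PY_def PXgY_def)

lemma PX_nth: "x < nx \<Longrightarrow> PX P $ x = (\<Sum>y<ny. P $$ (x, y))"
  and PY_nth: "y < ny \<Longrightarrow> PY P $ y = (\<Sum>x<nx. P $$ (x, y))"
  and PXgY_nth: "x < nx \<Longrightarrow> y < ny \<Longrightarrow> PXgY P $$ (x, y) = P $$ (x, y) / PY P $ y"
  by (simp_all add: PX_def PY_def PXgY_def)

lemma sum_PX: "(\<Sum>x<nx. PX P $ x) = 1"
  using P_sum by (simp add: PX_nth)

lemma sum_PY: "(\<Sum>y<ny. PY P $ y) = 1"
  using P_sum by (simp add: PY_nth sum.swap[of _ "{..<nx}"])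

lemma sum_PXgY_mult_vec:
  assumes "p \<in> carrier_vec ny"
  shows "(\<Sum>x<nx. (PXgY P *\<^sub>v p) $ x) = (\<Sum>y<ny. p $ y)"
proof -
  have "(\<Sum>x<nx. (PXgY P *\<^sub>v p) $ x) = (\<Sum>y<ny. (\<Sum>x<nx. P $$ (x, y)) / PY P $ y * p $ y)"
    using assms by (simp add: mult_mat_vec_nth[of _ nx ny] PXgY_nth sum.swap[of _ "{..<nx}"]
        sum_distrib_right sum_divide_distrib del: index_mult_mat_vec)
  also have "\<dots> = (\<Sum>y<ny. p $ y)"
    using PY_pos by (intro sum.cong) (auto simp: PY_nth[symmetric])
  finally show ?thesis .
qed

lemma PXgY_mult_PY: "PXgY P *\<^sub>v PY P = PX P"
proof (rule eq_vecI)
  fix x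
  assume "x < dim_vec (PX P)"
  then have x: "x < nx"
    by simp
  have "(PXgY P *\<^sub>v PY P) $ x = (\<Sum>y<ny. P $$ (x, y) / PY P $ y * PY P $ y)"
    using x by (simp add: mult_mat_vec_nth[of _ nx ny] PXgY_nth del: index_mult_mat_vec)
  also have "\<dots> = (\<Sum>y<ny. P $$ (x, y))"
    using PY_pos by (intro sum.cong) force+
  finally show "(PXgY P *\<^sub>v PY P) $ x = PX P $ x"
    using x by (simp add: PX_nth)
qed simp

lemma PY_feasible: "0 \<le> \<epsilon> \<Longrightarrow> PY P \<in> feasible_posteriors P \<epsilon>"
  using PY_pos sum_PY by (auto simp: feasible_posteriors_def PXgY_mult_PY less_imp_le l1norm_def
      simp del: index_mult_mat_vec)

lemma feasible_posteriors_closed: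
  assumes "\<And>j. s j \<in> feasible_posteriors P \<epsilon>" and "q \<in> carrier_vec ny"
    and lim: "\<And>y. y < ny \<Longrightarrow> (\<lambda>j. s j $ y) \<longlonglongrightarrow> q $ y"
  shows "q \<in> feasible_posteriors P \<epsilon>"
proof -
  have s: "s j \<in> carrier_vec ny" "\<forall>y<ny. 0 \<le> s j $ y" "(\<Sum>y<ny. s j $ y) = 1"
    "l1norm (PXgY P *\<^sub>v s j - PX P) \<le> \<epsilon>" for j
    using assms(1)[of j] by (auto simp: feasible_posteriors_def)
  have l1norm_eq: "l1norm (PXgY P *\<^sub>v v - PX P) =
      (\<Sum>x<nx. \<bar>(\<Sum>y<ny. PXgY P $$ (x, y) * v $ y) - PX P $ x\<bar>)"
    if "v \<in> carrier_vec ny" for v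
    using that by (auto simp: l1norm_def mult_mat_vec_nth[of _ nx ny] simp del: index_mult_mat_vec
        intro!: sum.cong)
  have "0 \<le> q $ y" if "y < ny" for y
    using s(2) that by (intro LIMSEQ_le_const[OF lim[OF that]]) auto
  moreover have "(\<lambda>j. \<Sum>y<ny. s j $ y) \<longlonglongrightarrow> (\<Sum>y<ny. q $ y)"
    by (intro tendsto_sum lim) simp
  then have "(\<Sum>y<ny. q $ y) = 1"
    using s(3) by (simp add: LIMSEQ_const_iff)
  moreover have "(\<lambda>j. l1norm (PXgY P *\<^sub>v s j - PX P)) \<longlonglongrightarrow> l1norm (PXgY P *\<^sub>v q - PX P)"
    unfolding l1norm_eq[OF s(1)] l1norm_eq[OF \<open>q \<in> carrier_vec ny\<close>]
    by (intro tendsto_intros lim) auto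
  then have "l1norm (PXgY P *\<^sub>v q - PX P) \<le> \<epsilon>"
    using s(4) by (intro LIMSEQ_le_const2) auto
  ultimately show ?thesis
    using \<open>q \<in> carrier_vec ny\<close> by (simp add: feasible_posteriors_def)
qed

(* Also for letters of probability zero: then both sides vanish, as x / 0 = 0. *)
lemma PXgU_of_eq: "PXgU_of P Q u = PXgY P *\<^sub>v PYgU_of P Q u"
proof (rule eq_vecI)
  fix x
  assume "x < dim_vec (PXgY P *\<^sub>v PYgU_of P Q u)"
  then have x: "x < nx"
    by simp
  have "(PXgY P *\<^sub>v PYgU_of P Q u) $ x
      = (\<Sum>y<ny. P $$ (x, y) / PY P $ y * (PY P $ y * Q u y / PU_of P Q u))"
    using x by (simp add: mult_mat_vec_nth[of _ nx ny] PXgY_nth PYgU_of_def del: index_mult_mat_vec)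
  also have "\<dots> = (\<Sum>y<ny. P $$ (x, y) * Q u y / PU_of P Q u)"
    using PY_pos by (intro sum.cong) auto
  also have "\<dots> = (\<Sum>y<ny. P $$ (x, y) * Q u y) / PU_of P Q u"
    by (simp add: sum_divide_distrib)
  finally show "PXgU_of P Q u $ x = (PXgY P *\<^sub>v PYgU_of P Q u) $ x"
    using x by (simp add: PXgU_of_def)
qed (simp add: PXgU_of_def)

lemma sum_PYgU_of: "PU_of P Q u \<noteq> 0 \<Longrightarrow> (\<Sum>y<ny. PYgU_of P Q u $ y) = 1"
  by (simp add: PYgU_of_def PU_of_def sum_divide_distrib[symmetric])

lemma PU_of_nonneg: "\<forall>y<ny. 0 \<le> Q u y \<Longrightarrow> 0 \<le> PU_of P Q u"
  unfolding PU_of_def using PY_pos by (auto intro!: sum_nonneg simp: less_imp_le)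

lemma PU_of_mult_PYgU_of:
  assumes Q: "\<forall>y<ny. 0 \<le> Q u y" and "y < ny"
  shows "PU_of P Q u * PYgU_of P Q u $ y = PY P $ y * Q u y"
proof (cases "PU_of P Q u = 0")
  case True
  then have "\<forall>y\<in>{..<ny}. PY P $ y * Q u y = 0"
    using Q PY_pos unfolding PU_of_def
    by (subst sum_nonneg_eq_0_iff[symmetric]) (auto intro: less_imp_le)
  then show ?thesis
    using True \<open>y < ny\<close> by simp
qed (use \<open>y < ny\<close> in \<open>simp add: PYgU_of_def\<close>)

lemma PYgU_of_feasible:
  assumes "\<forall>y<ny. 0 \<le> Q u y" and "0 < PU_of P Q u"
    and "l1norm (PXgU_of P Q u - PX P) \<le> \<epsilon>"
  shows "PYgU_of P Q u \<in> feasible_posteriors P \<epsilon>"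
  using assms PY_pos sum_PYgU_of
  by (auto simp: feasible_posteriors_def PYgU_of_def PXgU_of_eq less_imp_le)

lemma left_values_subset:
  assumes "0 \<le> \<epsilon>"
  shows "left_values P \<epsilon> \<subseteq> conditional_entropy_values (feasible_posteriors P \<epsilon>) (PY P)"
proof
  fix H
  assume "H \<in> left_values P \<epsilon>"
  then obtain k Q where Q_nonneg: "\<forall>u<k. \<forall>y<ny. 0 \<le> Q u y" and Q_sum: "\<forall>y<ny. (\<Sum>u<k. Q u y) = 1"
    and Q_privacy: "\<forall>u<k. 0 < PU_of P Q u \<longrightarrow> l1norm (PXgU_of P Q u - PX P) \<le> \<epsilon>"
    and H: "H = (\<Sum>u<k. PU_of P Q u * entropy (PYgU_of P Q u))"
    unfolding left_values_def by auto
  \<comment> \<open>letters of probability zero get the (arbitrary) feasible posterior \<open>P\<^sub>Y\<close>\<close>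
  define p where "p u = (if PU_of P Q u = 0 then PY P else PYgU_of P Q u)" for u
  have weighted: "PU_of P Q u * p u $ y = PY P $ y * Q u y" if "u < k" "y < ny" for u y
  proof -
    have "\<forall>y<ny. 0 \<le> Q u y"
      using Q_nonneg that(1) by blast
    from PU_of_mult_PYgU_of[of Q u, OF this that(2)] show ?thesis
      by (cases "PU_of P Q u = 0") (simp_all add: p_def)
  qed
  have "convex_decomposition (feasible_posteriors P \<epsilon>) (PY P) k (PU_of P Q) p"
    unfolding convex_decomposition_def
  proof (intro conjI allI impI)
    show "0 \<le> PU_of P Q u" if "u < k" for u
      using PU_of_nonneg Q_nonneg that by blast
    have "(\<Sum>u<k. PU_of P Q u) = (\<Sum>y<ny. PY P $ y * (\<Sum>u<k. Q u y))"
      by (simp add: PU_of_def sum.swap[of _ "{..<k}"] sum_distrib_left)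
    then show "(\<Sum>u<k. PU_of P Q u) = 1"
      using Q_sum sum_PY by simp
    show "(\<Sum>u<k. PU_of P Q u * p u $ y) = PY P $ y" if "y < dim_vec (PY P)" for y
      using that Q_sum by (simp add: weighted sum_distrib_left[symmetric])
    show "p u \<in> feasible_posteriors P \<epsilon>" if "u < k" for u
      using PY_feasible[OF assms] PYgU_of_feasible[of Q u] PU_of_nonneg[of Q u]
        Q_nonneg Q_privacy that
      by (auto simp: p_def)
  qed
  moreover have "H = (\<Sum>u<k. PU_of P Q u * entropy (p u))"
    unfolding H by (intro sum.cong) (auto simp: p_def)
  ultimately show "H \<in> conditional_entropy_values (feasible_posteriors P \<epsilon>) (PY P)"
    by (auto simp: conditional_entropy_values_def)
qed

lemma conditional_entropy_values_subset_left:
  "conditional_entropy_values (feasible_posteriors P \<epsilon>) (PY P) \<subseteq> left_values P \<epsilon>"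
proof
  fix H
  assume "H \<in> conditional_entropy_values (feasible_posteriors P \<epsilon>) (PY P)"
  then obtain k :: nat and w p where w_nonneg: "\<forall>u<k. 0 \<le> w u"
    and p: "\<forall>u<k. p u \<in> feasible_posteriors P \<epsilon>"
    and mix: "\<forall>y<ny. (\<Sum>u<k. w u * p u $ y) = PY P $ y"
    and H: "H = (\<Sum>u<k. w u * entropy (p u))"
    by (auto simp: conditional_entropy_values_def convex_decomposition_def)
  \<comment> \<open>Bayes' rule: \<open>P\<^sub>U\<^sub>|\<^sub>Y(u|y) = P\<^sub>U(u) P\<^sub>Y\<^sub>|\<^sub>U(y|u) / P\<^sub>Y(y)\<close>\<close>
  define Q where "Q u y = w u * p u $ y / PY P $ y" for u y
  have PU: "PU_of P Q u = w u" if "u < k" for u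
  proof -
    have "PU_of P Q u = (\<Sum>y<ny. w u * p u $ y)"
      unfolding PU_of_def Q_def using PY_pos by (intro sum.cong) auto
    then show ?thesis
      using p that by (simp add: feasible_posteriors_def sum_distrib_left[symmetric])
  qed
  have PYgU: "PYgU_of P Q u = p u" if "u < k" "w u \<noteq> 0" for u
  proof -
    have "p u \<in> carrier_vec ny"
      using p that(1) by (simp add: feasible_posteriors_def)
    then show ?thesis
      using that PY_pos by (intro eq_vecI) (auto simp: PYgU_of_def PU Q_def)
  qed
  have "\<forall>u<k. \<forall>y<ny. 0 \<le> Q u y"
    using w_nonneg p PY_pos by (auto simp: Q_def feasible_posteriors_def intro!: divide_nonneg_pos)
  moreover have "\<forall>y<ny. (\<Sum>u<k. Q u y) = 1"
    using mix PY_pos by (simp add: Q_def sum_divide_distrib[symmetric] less_imp_neq[symmetric])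
  moreover have "\<forall>u<k. 0 < PU_of P Q u \<longrightarrow> l1norm (PXgU_of P Q u - PX P) \<le> \<epsilon>"
    using p PU PYgU by (auto simp: PXgU_of_eq feasible_posteriors_def)
  moreover have "H = (\<Sum>u<k. PU_of P Q u * entropy (PYgU_of P Q u))"
    unfolding H by (intro sum.cong refl) (metis PU PYgU lessThan_iff mult_eq_0_iff)
  ultimately show "H \<in> left_values P \<epsilon>"
    unfolding left_values_def by auto
qed


lemma left_values_eq:
  "0 \<le> \<epsilon> \<Longrightarrow> left_values P \<epsilon> = conditional_entropy_values (feasible_posteriors P \<epsilon>) (PY P)"
  using left_values_subset conditional_entropy_values_subset_left by (intro equalityI)

lemma feasible_conditional_entropy_attains_min:
  assumes "0 \<le> \<epsilon>"
  shows "\<exists>v. is_min_of (conditional_entropy_values (feasible_posteriors P \<epsilon>) (PY P)) v"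
proof (rule conditional_entropy_values_attains_min[where n = ny])
  show "q \<in> feasible_posteriors P \<epsilon>"
    if "\<And>j. s j \<in> feasible_posteriors P \<epsilon>" "q \<in> carrier_vec ny"
      "\<And>y. y < ny \<Longrightarrow> (\<lambda>j. s j $ y) \<longlonglongrightarrow> q $ y" for s q
    using feasible_posteriors_closed that .
  have "convex_decomposition (feasible_posteriors P \<epsilon>) (PY P) 1 (\<lambda>_. 1) (\<lambda>_. PY P)"
    using PY_feasible[OF assms] by (simp add: convex_decomposition_def)
  then show "conditional_entropy_values (feasible_posteriors P \<epsilon>) (PY P) \<noteq> {}"
    by (auto simp: conditional_entropy_values_def)
qed (auto simp: feasible_posteriors_def)

lemma normalized_leakage_carrier [simp]: "normalized_leakage P \<epsilon> p \<in> carrier_vec nx"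
  by (simp add: normalized_leakage_def)

lemma normalized_leakage_nth:
  "x < nx \<Longrightarrow> normalized_leakage P \<epsilon> p $ x = ((PXgY P *\<^sub>v p) $ x - PX P $ x) / \<epsilon>"
  by (simp add: normalized_leakage_def del: index_mult_mat_vec)

lemma PXgY_mult_eq_normalized_leakage:
  "0 < \<epsilon> \<Longrightarrow> PXgY P *\<^sub>v p = PX P + \<epsilon> \<cdot>\<^sub>v normalized_leakage P \<epsilon> p"
  by (intro eq_vecI) (simp_all add: normalized_leakage_def del: index_mult_mat_vec)

lemma sum_normalized_leakage:
  assumes "p \<in> carrier_vec ny" and "(\<Sum>y<ny. p $ y) = 1"
  shows "(\<Sum>x<nx. normalized_leakage P \<epsilon> p $ x) = 0"
proof -
  have "(\<Sum>x<nx. normalized_leakage P \<epsilon> p $ x) =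
      ((\<Sum>x<nx. (PXgY P *\<^sub>v p) $ x) - (\<Sum>x<nx. PX P $ x)) / \<epsilon>"
    by (simp add: normalized_leakage_nth sum_divide_distrib[symmetric] sum_subtractf
        del: index_mult_mat_vec)
  then show ?thesis
    using sum_PXgY_mult_vec[OF assms(1)] assms(2) sum_PX by simp
qed

lemma sum_abs_normalized_leakage:
  "0 < \<epsilon> \<Longrightarrow> (\<Sum>x<nx. \<bar>normalized_leakage P \<epsilon> p $ x\<bar>) = l1norm (PXgY P *\<^sub>v p - PX P) / \<epsilon>"
  by (simp add: normalized_leakage_nth l1norm_def sum_divide_distrib del: index_mult_mat_vec)

lemma mixture_normalized_leakage:
  assumes p: "\<forall>u<k. p u \<in> carrier_vec ny" and w: "(\<Sum>u<k. w u) = 1"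
    and mix: "\<forall>y<ny. (\<Sum>u<k. w u * p u $ y) = PY P $ y" and "x < nx"
  shows "(\<Sum>u<k. w u * normalized_leakage P \<epsilon> (p u) $ x) = 0"
proof -
  have "(\<Sum>u<k. w u * (PXgY P *\<^sub>v p u) $ x) = (\<Sum>u<k. w u * (\<Sum>y<ny. PXgY P $$ (x, y) * p u $ y))"
    using \<open>x < nx\<close> p
    by (intro sum.cong) (auto simp: mult_mat_vec_nth[of _ nx ny] simp del: index_mult_mat_vec)
  also have "\<dots> = (\<Sum>y<ny. PXgY P $$ (x, y) * (\<Sum>u<k. w u * p u $ y))"
    by (simp add: sum_distrib_left sum.swap[of _ "{..<k}"] mult.left_commute)
  also have "\<dots> = (PXgY P *\<^sub>v PY P) $ x"
    using mix \<open>x < nx\<close> by (simp add: mult_mat_vec_nth[of _ nx ny] del: index_mult_mat_vec)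
  finally have mixture: "(\<Sum>u<k. w u * (PXgY P *\<^sub>v p u) $ x) = PX P $ x"
    by (simp only: PXgY_mult_PY)
  have "(\<Sum>u<k. w u * normalized_leakage P \<epsilon> (p u) $ x) =
      (\<Sum>u<k. w u * (PXgY P *\<^sub>v p u) $ x - w u * PX P $ x) / \<epsilon>"
    using \<open>x < nx\<close>
    by (simp add: normalized_leakage_nth right_diff_distrib sum_divide_distrib
        del: index_mult_mat_vec)
  also have "\<dots> = ((\<Sum>u<k. w u * (PXgY P *\<^sub>v p u) $ x) - (\<Sum>u<k. w u) * PX P $ x) / \<epsilon>"
    by (simp only: sum_subtractf sum_distrib_right)
  finally show ?thesis
    using mixture w by simp
qed

context
  fixes M :: "real mat"
  assumes nx_le_ny: "nx \<le> ny" and PXgY1_invertible: "invertible_mat (PXgY1 P)"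
    and M_carrier: "M \<in> carrier_mat nx ny"
    and kernel_M: "\<And>w. w \<in> carrier_vec ny \<Longrightarrow> M *\<^sub>v w = 0\<^sub>v nx \<longleftrightarrow> PXgY P *\<^sub>v w = 0\<^sub>v nx"
begin

lemma mult_M_eq_iff:
  assumes y: "y \<in> carrier_vec ny" and z: "z \<in> carrier_vec ny"
  shows "M *\<^sub>v y = M *\<^sub>v z \<longleftrightarrow> PXgY P *\<^sub>v y = PXgY P *\<^sub>v z"
proof -
  have "M *\<^sub>v y = M *\<^sub>v z \<longleftrightarrow> M *\<^sub>v (y - z) = 0\<^sub>v nx"
    unfolding mult_minus_distrib_mat_vec[OF M_carrier y z]
    by (rule diff_eq_zero_vec_iff[OF mult_mat_vec_carrier[OF M_carrier y]
        mult_mat_vec_carrier[OF M_carrier z], symmetric])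
  also have "\<dots> \<longleftrightarrow> PXgY P *\<^sub>v (y - z) = 0\<^sub>v nx"
    using y z by (intro kernel_M) simp
  also have "\<dots> \<longleftrightarrow> PXgY P *\<^sub>v y = PXgY P *\<^sub>v z"
    unfolding mult_minus_distrib_mat_vec[OF PXgY_carrier y z]
    by (rule diff_eq_zero_vec_iff[OF mult_mat_vec_carrier[OF PXgY_carrier y]
        mult_mat_vec_carrier[OF PXgY_carrier z]])
  finally show ?thesis .
qed

lemma PXgY_mult_padded_inverse:
  assumes J: "J \<in> carrier_vec nx"
  defines "d \<equiv> (the (mat_inverse (PXgY1 P)) *\<^sub>v J) @\<^sub>v 0\<^sub>v (ny - nx)"
  shows "d \<in> carrier_vec ny" and "PXgY P *\<^sub>v d = J"
proof -
  have PXgY1: "PXgY1 P \<in> carrier_mat nx nx"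
    by (simp add: PXgY1_def)
  note B = invertible_mat_inverse[OF PXgY1 PXgY1_invertible]
  have BJ: "the (mat_inverse (PXgY1 P)) *\<^sub>v J \<in> carrier_vec nx"
    using B(1) J by simp
  show "d \<in> carrier_vec ny"
    using B(1) nx_le_ny unfolding d_def by (auto intro!: carrier_vecI)
  have "PXgY P *\<^sub>v d =
      mat nx nx (\<lambda>(i, j). PXgY P $$ (i, j)) *\<^sub>v (the (mat_inverse (PXgY1 P)) *\<^sub>v J)"
    unfolding d_def by (rule mult_mat_vec_append_zero[OF PXgY_carrier BJ nx_le_ny])
  also have "mat nx nx (\<lambda>(i, j). PXgY P $$ (i, j)) = PXgY1 P"
    by (simp add: PXgY1_def)
  also have "PXgY1 P *\<^sub>v (the (mat_inverse (PXgY1 P)) *\<^sub>v J) = J"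
    using B(2) J by (simp add: assoc_mult_mat_vec[OF PXgY1 B(1) J, symmetric])
  finally show "PXgY P *\<^sub>v d = J" .
qed

lemma S_set_iff:
  assumes J: "J \<in> carrier_vec nx"
  shows "y \<in> S_set P M \<epsilon> J \<longleftrightarrow>
    y \<in> carrier_vec ny \<and> (\<forall>i<ny. 0 \<le> y $ i) \<and> PXgY P *\<^sub>v y = PX P + \<epsilon> \<cdot>\<^sub>v J"
proof -
  define d where "d = (the (mat_inverse (PXgY1 P)) *\<^sub>v J) @\<^sub>v 0\<^sub>v (ny - nx)"
  note d = PXgY_mult_padded_inverse[OF J, folded d_def]
  have \<epsilon>d: "\<epsilon> \<cdot>\<^sub>v d \<in> carrier_vec ny"
    using d(1) by simp
  define t where "t = PY P + \<epsilon> \<cdot>\<^sub>v d"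
  have t: "t \<in> carrier_vec ny"
    using \<epsilon>d by (simp add: t_def)
  have "M *\<^sub>v t = M *\<^sub>v PY P + \<epsilon> \<cdot>\<^sub>v (M *\<^sub>v d)"
    unfolding t_def mult_add_distrib_mat_vec[OF M_carrier PY_carrier \<epsilon>d]
      mult_mat_vec[OF M_carrier d(1)] ..
  then have "S_set P M \<epsilon> J = {y \<in> carrier_vec ny. M *\<^sub>v y = M *\<^sub>v t \<and> (\<forall>i<ny. 0 \<le> y $ i)}"
    by (simp only: S_set_def dim_row_P dim_col_P d_def)
  moreover have "PXgY P *\<^sub>v t = PX P + \<epsilon> \<cdot>\<^sub>v J"
    unfolding t_def mult_add_distrib_mat_vec[OF PXgY_carrier PY_carrier \<epsilon>d]
      mult_mat_vec[OF PXgY_carrier d(1)] d(2) PXgY_mult_PY ..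
  ultimately show ?thesis
    using t by (cases "y \<in> carrier_vec ny") (simp_all add: mult_M_eq_iff conj_commute)
qed

lemma right_values_subset:
  assumes eps: "0 < \<epsilon>"
  shows "right_values P M \<epsilon> \<subseteq> conditional_entropy_values (feasible_posteriors P \<epsilon>) (PY P)"
proof
  fix H
  assume "H \<in> right_values P M \<epsilon>"
  then obtain k :: nat and PU J Pyu where PU: "\<forall>u<k. 0 \<le> PU u" "(\<Sum>u<k. PU u) = 1"
    and J_S: "\<forall>u<k. J u \<in> carrier_vec nx \<and> Pyu u \<in> S_set P M \<epsilon> (J u)"
    and mix: "\<forall>y<ny. (\<Sum>u<k. PU u * Pyu u $ y) = PY P $ y"
    and P1: "\<forall>u<k. (\<Sum>x<nx. J u $ x) = 0" and P3: "\<forall>u<k. (\<Sum>x<nx. \<bar>J u $ x\<bar>) \<le> 1"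
    and H: "H = (\<Sum>u<k. PU u * entropy (Pyu u))"
    unfolding right_values_def by auto
  have "Pyu u \<in> feasible_posteriors P \<epsilon>" if u: "u < k" for u
  proof -
    have J: "J u \<in> carrier_vec nx"
      using J_S u by simp
    have Pyu: "Pyu u \<in> carrier_vec ny" "\<forall>i<ny. 0 \<le> Pyu u $ i"
      and PXgY_Pyu: "PXgY P *\<^sub>v Pyu u = PX P + \<epsilon> \<cdot>\<^sub>v J u"
      using J_S u S_set_iff[OF J] by auto
    have "(\<Sum>y<ny. Pyu u $ y) = (\<Sum>x<nx. PX P $ x + \<epsilon> * J u $ x)"
      using J by (simp add: sum_PXgY_mult_vec[OF Pyu(1), symmetric] PXgY_Pyu)
    also have "\<dots> = 1"
      using sum_PX P1 u by (simp add: sum.distrib sum_distrib_left[symmetric])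
    finally have "(\<Sum>y<ny. Pyu u $ y) = 1" .
    moreover have "l1norm (PXgY P *\<^sub>v Pyu u - PX P) = \<epsilon> * (\<Sum>x<nx. \<bar>J u $ x\<bar>)"
      using J eps by (simp add: l1norm_def PXgY_Pyu abs_mult sum_distrib_left)
    moreover have "\<epsilon> * (\<Sum>x<nx. \<bar>J u $ x\<bar>) \<le> \<epsilon>"
      using P3 u eps by (simp add: mult_left_le)
    ultimately show ?thesis
      using Pyu by (simp add: feasible_posteriors_def)
  qed
  then show "H \<in> conditional_entropy_values (feasible_posteriors P \<epsilon>) (PY P)"
    using PU mix H by (auto simp: conditional_entropy_values_def convex_decomposition_def)
qed

lemma subset_right_values:
  assumes eps: "0 < \<epsilon>"
  shows "conditional_entropy_values (feasible_posteriors P \<epsilon>) (PY P) \<subseteq> right_values P M \<epsilon>"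
proof
  fix H
  assume "H \<in> conditional_entropy_values (feasible_posteriors P \<epsilon>) (PY P)"
  then obtain k :: nat and w p where w: "\<forall>u<k. 0 \<le> w u" "(\<Sum>u<k. w u) = 1"
    and p: "\<forall>u<k. p u \<in> feasible_posteriors P \<epsilon>"
    and mix: "\<forall>y<ny. (\<Sum>u<k. w u * p u $ y) = PY P $ y"
    and H: "H = (\<Sum>u<k. w u * entropy (p u))"
    by (auto simp: conditional_entropy_values_def convex_decomposition_def)
  define J where "J u = normalized_leakage P \<epsilon> (p u)" for u
  have "\<forall>u<k. J u \<in> carrier_vec nx \<and> p u \<in> S_set P M \<epsilon> (J u)"
    using p eps
    by (simp add: J_def S_set_iff feasible_posteriors_def PXgY_mult_eq_normalized_leakage)
  moreover have "\<forall>u<k. (\<Sum>x<nx. J u $ x) = 0"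
    using p by (simp add: J_def sum_normalized_leakage feasible_posteriors_def)
  moreover have "\<forall>x<nx. (\<Sum>u<k. w u * J u $ x) = 0"
    using p w(2) mix by (simp add: J_def mixture_normalized_leakage feasible_posteriors_def)
  moreover have "\<forall>u<k. (\<Sum>x<nx. \<bar>J u $ x\<bar>) \<le> 1"
    using p eps by (simp add: J_def sum_abs_normalized_leakage feasible_posteriors_def)
  ultimately show "H \<in> right_values P M \<epsilon>"
    unfolding right_values_def dim_row_P dim_col_P mem_Collect_eq
    using w mix H by (intro exI[of _ k] exI[of _ w] exI[of _ J] exI[of _ p]) simp
qed

lemma right_values_eq:
  "0 < \<epsilon> \<Longrightarrow> right_values P M \<epsilon> = conditional_entropy_values (feasible_posteriors P \<epsilon>) (PY P)"
  using right_values_subset subset_right_values by (intro equalityI)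
end

end

theorem theorem1:
  fixes P U S V M :: "real mat" and nx ny :: nat and \<epsilon> :: real
  assumes "P \<in> carrier_mat nx ny"
    and "nx < ny"
    and "\<forall>x<nx. \<forall>y<ny. P $$ (x, y) \<ge> 0"
    and "(\<Sum>x<nx. \<Sum>y<ny. P $$ (x, y)) = 1"
    and "\<forall>x<nx. PX P $ x > 0"
    and "\<forall>y<ny. PY P $ y > 0"
    and "\<forall>c \<in> carrier_vec nx. transpose_mat (PXgY P) *\<^sub>v c = 0\<^sub>v ny \<longrightarrow> c = 0\<^sub>v nx"
    and "invertible_mat (PXgY1 P)"
    and "is_svd (PXgY P) U S V"
    and "M = mat nx ny (\<lambda>(i, j). V $$ (j, i))"
    and "\<epsilon> > 0"
  shows "\<exists>v. is_min_of (left_values P \<epsilon>) v \<and> is_min_of (right_values P M \<epsilon>) v"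
proof -
  interpret joint_pmf P nx ny
    using assms(1,4,6) by unfold_locales
  have kernel: "M *\<^sub>v w = 0\<^sub>v nx \<longleftrightarrow> PXgY P *\<^sub>v w = 0\<^sub>v nx" if "w \<in> carrier_vec ny" for w
    using svd_kernel_eq[OF assms(9) PXgY_carrier _ assms(7,10) that] assms(2) by simp
  have "M \<in> carrier_mat nx ny"
    using assms(10) by simp
  then have "right_values P M \<epsilon> = conditional_entropy_values (feasible_posteriors P \<epsilon>) (PY P)"
    using right_values_eq[OF _ assms(8) _ kernel assms(11)] assms(2) by simp
  moreover have "left_values P \<epsilon> = conditional_entropy_values (feasible_posteriors P \<epsilon>) (PY P)"
    using left_values_eq assms(11) by simp
  ultimately show ?thesis
    using feasible_conditional_entropy_attains_min assms(11) by simp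
qed

end
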